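(* Let $\lambda_1,\lambda_2,\mu>0$, $p_{12},p_{21}\in[0,1]$, $r_1,r_2,h_1,h_2\ge0$, $c_1,c_2\in\mathbb{R}$. For nonnegative integers $Q_1,Q_2$ define $$\pi^{(2)}(Q_1,Q_2)=\mu\Big[(r_1-c_1)Q_1+(r_2-c_2)Q_2-(r_1+h_1)E_{Q_1,Q_2}[m_1]-(r_2+h_2)E_{Q_1,Q_2}[m_2]\Big],$$ where $(m_1,m_2)$ has the stationary distribution of the inventory CTMC with random replenishment and order levels $(Q_1,Q_2)$. Then $\pi^{(2)}$ is submodular: for all integers $Q_1,Q_2\ge0$, $$\pi^{(2)}(Q_1+1,Q_2+1)-\pi^{(2)}(Q_1+1,Q_2)-\pi^{(2)}(Q_1,Q_2+1)+\pi^{(2)}(Q_1,Q_2)\le0.$$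
   Context: Inventory CTMC with random replenishment and order levels $(Q_1,Q_2)$: state space $\{0,\dots,Q_1\}\times\{0,\dots,Q_2\}$; demand transitions: from $(i_1,i_2)$ with $i_1,i_2\ge1$, to $(i_1-1,i_2)$ at rate $\lambda_1$ and to $(i_1,i_2-1)$ at rate $\lambda_2$; from $(i_1,0)$ with $i_1\ge1$, to $(i_1-1,0)$ at rate $s_1=\lambda_1+\lambda_2p_{21}$; from $(0,i_2)$ with $i_2\ge1$, to $(0,i_2-1)$ at rate $s_2=\lambda_2+\lambda_1p_{12}$; no demand transitions out of $(0,0)$; from every state a replenishment transition to $(Q_1,Q_2)$ at rate $\mu$. $r_i,c_i,h_i$ are the retail price, unit purchase cost, and end-of-period holding cost of product $i$. *)

theory Defs
  imports Complex_Main
begin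

definition inv_states :: "nat \<Rightarrow> nat \<Rightarrow> (nat \<times> nat) set" where
  "inv_states Q1 Q2 = {0..Q1} \<times> {0..Q2}"

definition demand_rate ::
  "real \<Rightarrow> real \<Rightarrow> real \<Rightarrow> real \<Rightarrow> nat \<times> nat \<Rightarrow> nat \<times> nat \<Rightarrow> real" where
  "demand_rate l1 l2 p12 p21 x y =
     (let (i1, i2) = x in
      if i1 \<ge> 1 \<and> i2 \<ge> 1 then
        (if y = (i1 - 1, i2) then l1 else if y = (i1, i2 - 1) then l2 else 0)
      else if i1 \<ge> 1 \<and> i2 = 0 then
        (if y = (i1 - 1, 0) then l1 + l2 * p21 else 0)
      else if i1 = 0 \<and> i2 \<ge> 1 then
        (if y = (0, i2 - 1) then l2 + l1 * p12 else 0)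
      else 0)"

definition inv_rate ::
  "real \<Rightarrow> real \<Rightarrow> real \<Rightarrow> real \<Rightarrow> real \<Rightarrow> nat \<Rightarrow> nat \<Rightarrow> nat \<times> nat \<Rightarrow> nat \<times> nat \<Rightarrow> real" where
  "inv_rate l1 l2 mu p12 p21 Q1 Q2 x y =
     (if x = y then 0
      else demand_rate l1 l2 p12 p21 x y + (if y = (Q1, Q2) then mu else 0))"

definition is_stationary ::
  "real \<Rightarrow> real \<Rightarrow> real \<Rightarrow> real \<Rightarrow> real \<Rightarrow> nat \<Rightarrow> nat \<Rightarrow> (nat \<times> nat \<Rightarrow> real) \<Rightarrow> bool" where
  "is_stationary l1 l2 mu p12 p21 Q1 Q2 p \<longleftrightarrow>
     (\<forall>x. x \<notin> inv_states Q1 Q2 \<longrightarrow> p x = 0) \<and>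
     (\<forall>x \<in> inv_states Q1 Q2. p x \<ge> 0) \<and>
     (\<Sum>x \<in> inv_states Q1 Q2. p x) = 1 \<and>
     (\<forall>y \<in> inv_states Q1 Q2.
        (\<Sum>x \<in> inv_states Q1 Q2. p x * inv_rate l1 l2 mu p12 p21 Q1 Q2 x y) =
        p y * (\<Sum>z \<in> inv_states Q1 Q2. inv_rate l1 l2 mu p12 p21 Q1 Q2 y z))"

definition stat_dist ::
  "real \<Rightarrow> real \<Rightarrow> real \<Rightarrow> real \<Rightarrow> real \<Rightarrow> nat \<Rightarrow> nat \<Rightarrow> nat \<times> nat \<Rightarrow> real" where
  "stat_dist l1 l2 mu p12 p21 Q1 Q2 = (THE p. is_stationary l1 l2 mu p12 p21 Q1 Q2 p)"

definition E_m1 :: "real \<Rightarrow> real \<Rightarrow> real \<Rightarrow> real \<Rightarrow> real \<Rightarrow> nat \<Rightarrow> nat \<Rightarrow> real" where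
  "E_m1 l1 l2 mu p12 p21 Q1 Q2 =
     (\<Sum>x \<in> inv_states Q1 Q2. real (fst x) * stat_dist l1 l2 mu p12 p21 Q1 Q2 x)"

definition E_m2 :: "real \<Rightarrow> real \<Rightarrow> real \<Rightarrow> real \<Rightarrow> real \<Rightarrow> nat \<Rightarrow> nat \<Rightarrow> real" where
  "E_m2 l1 l2 mu p12 p21 Q1 Q2 =
     (\<Sum>x \<in> inv_states Q1 Q2. real (snd x) * stat_dist l1 l2 mu p12 p21 Q1 Q2 x)"

definition profit2 ::
  "real \<Rightarrow> real \<Rightarrow> real \<Rightarrow> real \<Rightarrow> real \<Rightarrow> real \<Rightarrow> real \<Rightarrow> real \<Rightarrow> real \<Rightarrow> real \<Rightarrow> real \<Rightarrow>
   nat \<Rightarrow> nat \<Rightarrow> real" where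
  "profit2 l1 l2 mu p12 p21 r1 r2 c1 c2 h1 h2 Q1 Q2 =
     mu * ((r1 - c1) * real Q1 + (r2 - c2) * real Q2
           - (r1 + h1) * E_m1 l1 l2 mu p12 p21 Q1 Q2
           - (r2 + h2) * E_m2 l1 l2 mu p12 p21 Q1 Q2)"

end

theory Submission
  imports Defs
begin

text \<open>Replenishment resets the chain to \<open>(Q1, Q2)\<close> at rate \<open>mu\<close> whatever the current state,
  so the stationary law is the law of the pure demand process started at \<open>(Q1, Q2)\<close> and observed
  at an independent exponential time of rate \<open>mu\<close>.  First-step analysis turns this into a
  recursion in the order levels, and \<open>E[m1]\<close>, \<open>E[m2]\<close> inherit linear recursions with positive
  coefficients.  In the interior these express the mixed difference at \<open>(a + 1, b + 1)\<close> as a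
  positive combination of those at \<open>(a, b + 1)\<close> and \<open>(a + 1, b)\<close>; on the two edges it is
  nonnegative by direct bounds, using that substitution only speeds up depletion of stock 1 once
  stock 2 is empty.  Hence the expectations are supermodular and the profit is submodular.\<close>

lemma nat_grid_induct:
  assumes "R 0 0" "\<And>a. R a 0 \<Longrightarrow> R (Suc a) 0" "\<And>b. R 0 b \<Longrightarrow> R 0 (Suc b)"
    "\<And>a b. R a (Suc b) \<Longrightarrow> R (Suc a) b \<Longrightarrow> R (Suc a) (Suc b)"
  shows "R a b"
proof (induction a arbitrary: b)
  case 0
  show ?case by (induction b) (use assms in auto)
next
  case (Suc a)
  show ?case by (induction b) (use assms Suc.IH in auto)
qed

definition mixed_diff :: "(nat \<Rightarrow> nat \<Rightarrow> real) \<Rightarrow> nat \<Rightarrow> nat \<Rightarrow> real" where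
  "mixed_diff G a b = G (Suc a) (Suc b) - G (Suc a) b - G a (Suc b) + G a b"

lemma mixed_diff_transpose: "mixed_diff (\<lambda>a b. G b a) b a = mixed_diff G a b"
  by (simp add: mixed_diff_def)

text \<open>The recursion satisfied by \<open>G a b = E[m1]\<close> at order levels \<open>(a, b)\<close>, with
  \<open>\<alpha> = \<lambda>1\<close>, \<open>\<beta> = \<lambda>2\<close> and \<open>s = \<lambda>1 + \<lambda>2 * p21\<close> the depletion rate of stock 1 once
  stock 2 is empty.\<close>

locale mean_level_recursion =
  fixes G :: "nat \<Rightarrow> nat \<Rightarrow> real" and \<alpha> \<beta> s mu :: real
  assumes pos: "\<alpha> > 0" "\<beta> > 0" "mu > 0" and s_ge: "\<alpha> \<le> s"
    and G_zero: "G 0 b = 0"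
    and G_edge: "(s + mu) * G (Suc a) 0 = mu * real (Suc a) + s * G a 0"
    and G_inner: "(\<alpha> + \<beta> + mu) * G (Suc a) (Suc b) =
      mu * real (Suc a) + \<alpha> * G a (Suc b) + \<beta> * G (Suc a) b"
begin

lemma G_one_le: "G 1 b \<le> mu / (\<alpha> + mu)"
proof (induction b)
  case 0
  have "G 1 0 = mu / (s + mu)" using G_edge[of 0] G_zero pos s_ge by (simp add: field_simps)
  then show ?case using pos s_ge by (simp add: frac_le)
next
  case (Suc b)
  have "(\<alpha> + \<beta> + mu) * G 1 (Suc b) = mu + \<beta> * G 1 b"
    using G_inner[of 0 b] G_zero by simp
  also have "\<dots> \<le> mu + \<beta> * (mu / (\<alpha> + mu))"
    using Suc pos by (intro add_left_mono mult_left_mono) auto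
  also have "\<dots> = (\<alpha> + \<beta> + mu) * (mu / (\<alpha> + mu))"
    using pos by (simp add: field_simps)
  finally show ?case
    by (rule mult_left_le_imp_le) (use pos in simp)
qed

lemma mixed_diff_at_a0: "0 \<le> mixed_diff G 0 b"
proof -
  have "(\<alpha> + \<beta> + mu) * mixed_diff G 0 b = mu - (\<alpha> + mu) * G 1 b"
    using G_inner[of 0 b] G_zero by (simp add: mixed_diff_def algebra_simps)
  also have "\<dots> \<ge> 0" using G_one_le[of b] pos by (simp add: field_simps)
  finally show ?thesis using pos by (simp add: zero_le_mult_iff)
qed

definition incr_a :: "nat \<Rightarrow> real" where
  "incr_a a = G (Suc a) 0 - G a 0"

definition incr_b :: "nat \<Rightarrow> real" where
  "incr_b a = G a 1 - G a 0"

lemma incr_a_0: "(s + mu) * incr_a 0 = mu"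
  using G_edge[of 0] G_zero by (simp add: incr_a_def)

lemma incr_a_Suc: "(s + mu) * incr_a (Suc a) = mu + s * incr_a a"
  using G_edge[of a] G_edge[of "Suc a"]
  by (simp add: incr_a_def algebra_simps)

lemma incr_a_bounds: "0 \<le> incr_a a \<and> incr_a a \<le> 1"
proof (induction a)
  case 0
  have "incr_a 0 = mu / (s + mu)"
    using incr_a_0 pos s_ge by (simp add: field_simps)
  then show ?case using pos s_ge by simp
next
  case (Suc a)
  have "incr_a (Suc a) = (mu + s * incr_a a) / (s + mu)"
    using incr_a_Suc[of a] pos s_ge by (simp add: field_simps)
  moreover have "s * incr_a a \<le> s" using Suc pos s_ge by (simp add: mult_left_le)
  ultimately show ?case using Suc pos s_ge by simp
qed

lemma incr_a_mono: "incr_a a \<le> incr_a (Suc a)"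
proof -
  have "(s + mu) * (incr_a (Suc a) - incr_a a) = mu * (1 - incr_a a)"
    using incr_a_Suc[of a] by (simp add: algebra_simps)
  also have "\<dots> \<ge> 0" using incr_a_bounds[of a] pos by simp
  finally show ?thesis using pos s_ge by (simp add: zero_le_mult_iff)
qed

lemma incr_b_0: "incr_b 0 = 0"
  by (simp add: incr_b_def G_zero)

lemma incr_b_Suc:
  "(\<alpha> + \<beta> + mu) * incr_b (Suc a) = \<alpha> * incr_b a + (s - \<alpha>) * incr_a a"
  using G_inner[of a 0] G_edge[of a]
  by (simp add: incr_b_def incr_a_def algebra_simps)

lemma incr_b_mono: "incr_b a \<le> incr_b (Suc a)"
proof (induction a)
  case 0
  have "0 \<le> (\<alpha> + \<beta> + mu) * incr_b 1"
    using incr_b_Suc[of 0] incr_b_0 incr_a_bounds[of 0] s_ge by simp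
  then show ?case using incr_b_0 pos by (simp add: zero_le_mult_iff)
next
  case (Suc a)
  have "(\<alpha> + \<beta> + mu) * (incr_b (Suc (Suc a)) - incr_b (Suc a))
      = \<alpha> * (incr_b (Suc a) - incr_b a) + (s - \<alpha>) * (incr_a (Suc a) - incr_a a)"
    using incr_b_Suc[of "Suc a"] incr_b_Suc[of a] by (simp add: algebra_simps)
  also have "\<dots> \<ge> 0" using Suc incr_a_mono[of a] pos s_ge by simp
  finally show ?case using pos by (simp add: zero_le_mult_iff)
qed

lemma mixed_diff_at_b0: "0 \<le> mixed_diff G a 0"
  using incr_b_mono[of a] by (simp add: mixed_diff_def incr_b_def)

lemma mixed_diff_inner:
  "(\<alpha> + \<beta> + mu) * mixed_diff G (Suc a) (Suc b) =
     \<alpha> * mixed_diff G a (Suc b) + \<beta> * mixed_diff G (Suc a) b"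
  using G_inner[of "Suc a" "Suc b"] G_inner[of "Suc a" b]
    G_inner[of a "Suc b"] G_inner[of a b]
  by (simp add: mixed_diff_def algebra_simps del: of_nat_Suc)

lemma mixed_diff_nonneg: "0 \<le> mixed_diff G a b"
proof (induction a b rule: nat_grid_induct)
  case (4 a b)
  then have "0 \<le> (\<alpha> + \<beta> + mu) * mixed_diff G (Suc a) (Suc b)"
    using mixed_diff_inner[of a b] pos by simp
  then show ?case using pos by (simp add: zero_le_mult_iff)
qed (use mixed_diff_at_a0 mixed_diff_at_b0 in auto)

end

locale inventory =
  fixes l1 l2 mu p12 p21 :: real
  assumes l1_pos: "l1 > 0" and l2_pos: "l2 > 0" and mu_pos: "mu > 0"
    and p12_nonneg: "0 \<le> p12" and p21_nonneg: "0 \<le> p21"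
begin

text \<open>Demand rate of product 1 while product 2 is at level \<open>i2\<close> (with product 2 sold out,
  its customers substitute with probability \<open>p21\<close>), and symmetrically.\<close>

definition rate1 :: "nat \<Rightarrow> real" where
  "rate1 i2 = (if 0 < i2 then l1 else l1 + l2 * p21)"

definition rate2 :: "nat \<Rightarrow> real" where
  "rate2 i1 = (if 0 < i1 then l2 else l2 + l1 * p12)"

lemma rate1_pos: "rate1 i > 0"
  using l1_pos l2_pos p21_nonneg by (simp add: rate1_def add_pos_nonneg)

lemma rate2_pos: "rate2 i > 0"
  using l1_pos l2_pos p12_nonneg by (simp add: rate2_def add_pos_nonneg)

lemma demand_rate_into:
  "demand_rate l1 l2 p12 p21 x (y1, y2) =
     (if x = (Suc y1, y2) then rate1 y2 else 0) + (if x = (y1, Suc y2) then rate2 y1 else 0)"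
  by (cases x; cases "fst x"; cases "snd x"; cases y1; cases y2)
     (auto simp: demand_rate_def rate1_def rate2_def)

lemma demand_rate_from:
  "demand_rate l1 l2 p12 p21 (x1, x2) z =
     (if 0 < x1 \<and> z = (x1 - 1, x2) then rate1 x2 else 0)
   + (if 0 < x2 \<and> z = (x1, x2 - 1) then rate2 x1 else 0)"
  by (cases z; cases "fst z"; cases "snd z"; cases x1; cases x2)
     (auto simp: demand_rate_def rate1_def rate2_def)

definition out_rate :: "nat \<times> nat \<Rightarrow> real" where
  "out_rate x = (if 0 < fst x then rate1 (snd x) else 0) + (if 0 < snd x then rate2 (fst x) else 0)"

definition inflow :: "(nat \<times> nat \<Rightarrow> real) \<Rightarrow> nat \<times> nat \<Rightarrow> real" where
  "inflow p y = p (Suc (fst y), snd y) * rate1 (snd y) + p (fst y, Suc (snd y)) * rate2 (fst y)"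

text \<open>Global balance for a probability vector \<open>p\<close> when replenishment leads to \<open>q\<close>: every
  state loses mass \<open>mu * p y\<close> to replenishment and \<open>q\<close> receives \<open>mu * (\<Sum>x. p x) = mu\<close>.\<close>

definition balance_eqs :: "nat \<times> nat \<Rightarrow> (nat \<times> nat \<Rightarrow> real) \<Rightarrow> bool" where
  "balance_eqs q p \<longleftrightarrow> (\<forall>y. (out_rate y + mu) * p y = (if y = q then mu else 0) + inflow p y)"

lemma out_rate_nonneg: "out_rate x \<ge> 0"
  using rate1_pos rate2_pos by (simp add: out_rate_def less_imp_le)

lemma balance_eqs_step:
  assumes p: "\<And>y. (out_rate q + mu) * p y = (if y = q then mu else 0) + w1 * p1 y + w2 * p2 y"
    and w: "\<And>y. (if y = q1 then w1 else 0) + (if y = q2 then w2 else 0) = demand_rate l1 l2 p12 p21 q y"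
    and bal1: "w1 \<noteq> 0 \<Longrightarrow> balance_eqs q1 p1" and bal2: "w2 \<noteq> 0 \<Longrightarrow> balance_eqs q2 p2"
  shows "balance_eqs q p"
  unfolding balance_eqs_def
proof
  fix y
  define c where "c = out_rate q + mu"
  have c_pos: "c > 0" using out_rate_nonneg mu_pos by (simp add: c_def add_nonneg_pos)
  have in1: "w1 * ((out_rate y + mu) * p1 y) = w1 * ((if y = q1 then mu else 0) + inflow p1 y)"
    using bal1 unfolding balance_eqs_def by (metis mult_zero_left)
  have in2: "w2 * ((out_rate y + mu) * p2 y) = w2 * ((if y = q2 then mu else 0) + inflow p2 y)"
    using bal2 unfolding balance_eqs_def by (metis mult_zero_left)
  have c_inflow:
    "c * inflow p y = mu * demand_rate l1 l2 p12 p21 q y + w1 * inflow p1 y + w2 * inflow p2 y"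
    using p[of "(Suc (fst y), snd y)"] p[of "(fst y, Suc (snd y))"]
    unfolding c_def inflow_def demand_rate_into[of q "fst y" "snd y", simplified]
    by (auto simp: algebra_simps)
  have "c * ((out_rate y + mu) * p y) = (out_rate y + mu) * (c * p y)"
    by (simp add: ac_simps)
  also have "\<dots> = (out_rate y + mu) * (if y = q then mu else 0)
      + w1 * ((out_rate y + mu) * p1 y) + w2 * ((out_rate y + mu) * p2 y)"
    unfolding c_def p by (simp add: algebra_simps)
  also have "\<dots> = c * (if y = q then mu else 0)
      + (mu * demand_rate l1 l2 p12 p21 q y + w1 * inflow p1 y + w2 * inflow p2 y)"
    unfolding in1 in2 w[of y, symmetric] by (auto simp: c_def algebra_simps)
  also have "\<dots> = c * ((if y = q then mu else 0) + inflow p y)"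
    unfolding c_inflow[symmetric] by (simp add: distrib_left)
  finally show "(out_rate y + mu) * p y = (if y = q then mu else 0) + inflow p y"
    using c_pos by simp
qed

function stat_rec :: "nat \<Rightarrow> nat \<Rightarrow> nat \<times> nat \<Rightarrow> real" where
  "stat_rec a b = (\<lambda>y. ((if y = (a, b) then mu else 0)
     + (if 0 < a then rate1 b * stat_rec (a - 1) b y else 0)
     + (if 0 < b then rate2 a * stat_rec a (b - 1) y else 0)) / (out_rate (a, b) + mu))"
  by pat_completeness auto
termination by (relation "measure (\<lambda>(a, b). a + b)") auto

declare stat_rec.simps [simp del]

lemma stat_rec_mult:
  "(out_rate (a, b) + mu) * stat_rec a b y = (if y = (a, b) then mu else 0)
     + (if 0 < a then rate1 b else 0) * stat_rec (a - 1) b y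
     + (if 0 < b then rate2 a else 0) * stat_rec a (b - 1) y"
proof -
  have "out_rate (a, b) + mu > 0" using out_rate_nonneg mu_pos by (simp add: add_nonneg_pos)
  then show ?thesis by (subst stat_rec.simps) simp
qed

lemma stat_rec_outside: "y \<notin> inv_states a b \<Longrightarrow> stat_rec a b y = 0"
proof (induction a b rule: stat_rec.induct)
  case (1 a b)
  have "y \<notin> inv_states (a - 1) b" "y \<notin> inv_states a (b - 1)" "y \<noteq> (a, b)"
    using "1.prems" by (auto simp: inv_states_def)
  then have "(out_rate (a, b) + mu) * stat_rec a b y = 0"
    unfolding stat_rec_mult using "1.IH" by auto
  then show ?case using out_rate_nonneg[of "(a, b)"] mu_pos by simp
qed

lemma stat_rec_nonneg: "stat_rec a b y \<ge> 0"
proof (induction a b rule: stat_rec.induct)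
  case (1 a b)
  then have "(out_rate (a, b) + mu) * stat_rec a b y \<ge> 0"
    unfolding stat_rec_mult using mu_pos rate1_pos rate2_pos by (simp add: less_imp_le)
  then show ?case using out_rate_nonneg[of "(a, b)"] mu_pos by (simp add: zero_le_mult_iff)
qed

lemma stat_rec_balance: "balance_eqs (a, b) (stat_rec a b)"
proof (induction a b rule: stat_rec.induct)
  case (1 a b)
  show ?case
  proof (rule balance_eqs_step[OF stat_rec_mult])
    show "(if y = (a - 1, b) then if 0 < a then rate1 b else 0 else 0)
        + (if y = (a, b - 1) then if 0 < b then rate2 a else 0 else 0)
        = demand_rate l1 l2 p12 p21 (a, b) y" for y
      by (cases a; cases b) (simp_all add: demand_rate_from)
  qed (use 1 in \<open>simp_all split: if_splits\<close>)
qed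

lemma sum_stat_rec_grid:
  assumes "a \<le> a'" "b \<le> b'"
  shows "(\<Sum>y\<in>inv_states a' b'. f y * stat_rec a b y) = (\<Sum>y\<in>inv_states a b. f y * stat_rec a b y)"
  by (rule sum.mono_neutral_right) (use assms in \<open>auto simp: inv_states_def stat_rec_outside\<close>)

lemma mean_stat_rec:
  "(out_rate (a, b) + mu) * (\<Sum>y\<in>inv_states a b. f y * stat_rec a b y) = mu * f (a, b)
     + (if 0 < a then rate1 b else 0) * (\<Sum>y\<in>inv_states (a - 1) b. f y * stat_rec (a - 1) b y)
     + (if 0 < b then rate2 a else 0) * (\<Sum>y\<in>inv_states a (b - 1). f y * stat_rec a (b - 1) y)"
proof -
  let ?G = "inv_states a b"
  have fin: "finite ?G" and top: "(a, b) \<in> ?G" by (simp_all add: inv_states_def)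
  have "(out_rate (a, b) + mu) * (\<Sum>y\<in>?G. f y * stat_rec a b y)
      = (\<Sum>y\<in>?G. f y * ((out_rate (a, b) + mu) * stat_rec a b y))"
    by (simp add: sum_distrib_left ac_simps)
  also have "\<dots> = (\<Sum>y\<in>?G. (if y = (a, b) then mu * f y else 0)
          + (if 0 < a then rate1 b else 0) * (f y * stat_rec (a - 1) b y)
          + (if 0 < b then rate2 a else 0) * (f y * stat_rec a (b - 1) y))"
    unfolding stat_rec_mult by (rule sum.cong) (auto simp: algebra_simps)
  also have "\<dots> = mu * f (a, b)
      + (if 0 < a then rate1 b else 0) * (\<Sum>y\<in>?G. f y * stat_rec (a - 1) b y)
      + (if 0 < b then rate2 a else 0) * (\<Sum>y\<in>?G. f y * stat_rec a (b - 1) y)"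
    by (simp add: sum.distrib sum_distrib_left fin top)
  finally show ?thesis
    using sum_stat_rec_grid[of "a - 1" a b b f] sum_stat_rec_grid[of a a "b - 1" b f] by simp
qed

lemma sum_stat_rec: "(\<Sum>y\<in>inv_states a b. stat_rec a b y) = 1"
proof (induction a b rule: stat_rec.induct)
  case (1 a b)
  have "(if 0 < a then rate1 b else 0) * (\<Sum>y\<in>inv_states (a - 1) b. stat_rec (a - 1) b y)
      = (if 0 < a then rate1 b else 0)"
    "(if 0 < b then rate2 a else 0) * (\<Sum>y\<in>inv_states a (b - 1). stat_rec a (b - 1) y)
      = (if 0 < b then rate2 a else 0)"
    using "1.IH" by simp_all
  with mean_stat_rec[of a b "\<lambda>_. 1"]
  have "(out_rate (a, b) + mu) * (\<Sum>y\<in>inv_states a b. stat_rec a b y) = out_rate (a, b) + mu"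
    by (simp only: mult_1 out_rate_def fst_conv snd_conv)
  then show ?case using out_rate_nonneg[of "(a, b)"] mu_pos by simp
qed

lemma inv_rate_eq:
  "inv_rate l1 l2 mu p12 p21 a b x y =
     demand_rate l1 l2 p12 p21 x y + (if y = (a, b) \<and> x \<noteq> (a, b) then mu else 0)"
proof -
  have "demand_rate l1 l2 p12 p21 x x = 0" by (cases x) (auto simp: demand_rate_from)
  then show ?thesis by (auto simp: inv_rate_def)
qed

lemma inv_rate_into_sum:
  assumes supp: "\<And>x. x \<notin> inv_states a b \<Longrightarrow> p x = 0"
  shows "(\<Sum>x\<in>inv_states a b. p x * inv_rate l1 l2 mu p12 p21 a b x y) = inflow p y
     + (if y = (a, b) then mu * (\<Sum>x\<in>inv_states a b. p x) - mu * p (a, b) else 0)"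
proof -
  obtain y1 y2 where y: "y = (y1, y2)" by (cases y)
  let ?G = "inv_states a b"
  have fin: "finite ?G" and top: "(a, b) \<in> ?G" by (simp_all add: inv_states_def)
  have "p x * inv_rate l1 l2 mu p12 p21 a b x y =
      (if x = (Suc y1, y2) then p (Suc y1, y2) * rate1 y2 else 0)
    + (if x = (y1, Suc y2) then p (y1, Suc y2) * rate2 y1 else 0)
    + (if y = (a, b) then mu * p x - (if x = (a, b) then mu * p (a, b) else 0) else 0)" for x
    unfolding inv_rate_eq y demand_rate_into by (auto simp: algebra_simps)
  moreover have "(\<Sum>x\<in>?G. if x = (Suc y1, y2) then p (Suc y1, y2) * rate1 y2 else 0)
      = p (Suc y1, y2) * rate1 y2"
    using supp[of "(Suc y1, y2)"] by (simp add: fin)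
  moreover have "(\<Sum>x\<in>?G. if x = (y1, Suc y2) then p (y1, Suc y2) * rate2 y1 else 0)
      = p (y1, Suc y2) * rate2 y1"
    using supp[of "(y1, Suc y2)"] by (simp add: fin)
  moreover have "(\<Sum>x\<in>?G. if y = (a, b) then mu * p x - (if x = (a, b) then mu * p (a, b) else 0) else 0)
      = (if y = (a, b) then mu * (\<Sum>x\<in>?G. p x) - mu * p (a, b) else 0)"
    by (simp add: sum_subtractf sum_distrib_left fin top)
  ultimately show ?thesis by (simp add: sum.distrib y inflow_def)
qed

lemma inv_rate_from_sum:
  assumes "y \<in> inv_states a b"
  shows "(\<Sum>z\<in>inv_states a b. inv_rate l1 l2 mu p12 p21 a b y z)
     = out_rate y + (if y \<noteq> (a, b) then mu else 0)"
proof -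
  obtain y1 y2 where y: "y = (y1, y2)" by (cases y)
  let ?G = "inv_states a b"
  have fin: "finite ?G" and top: "(a, b) \<in> ?G" by (simp_all add: inv_states_def)
  have "(y1 - 1, y2) \<in> ?G" "(y1, y2 - 1) \<in> ?G" using assms by (auto simp: y inv_states_def)
  moreover have "inv_rate l1 l2 mu p12 p21 a b y z =
      (if z = (y1 - 1, y2) then (if 0 < y1 then rate1 y2 else 0) else 0)
    + (if z = (y1, y2 - 1) then (if 0 < y2 then rate2 y1 else 0) else 0)
    + (if z = (a, b) then (if y \<noteq> (a, b) then mu else 0) else 0)" for z
    unfolding inv_rate_eq y demand_rate_from by auto
  ultimately show ?thesis by (simp add: sum.distrib fin top y out_rate_def)
qed

lemma stationary_eq_iff_balance:
  assumes "\<And>x. x \<notin> inv_states a b \<Longrightarrow> p x = 0" and "(\<Sum>x\<in>inv_states a b. p x) = 1"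
    and "y \<in> inv_states a b"
  shows "(\<Sum>x\<in>inv_states a b. p x * inv_rate l1 l2 mu p12 p21 a b x y) =
         p y * (\<Sum>z\<in>inv_states a b. inv_rate l1 l2 mu p12 p21 a b y z)
     \<longleftrightarrow> (out_rate y + mu) * p y = (if y = (a, b) then mu else 0) + inflow p y"
  using inv_rate_into_sum[OF assms(1), where y = y] inv_rate_from_sum[OF assms(3)] assms(2)
  by (cases "y = (a, b)") (auto simp: algebra_simps)

lemma is_stationary_iff:
  "is_stationary l1 l2 mu p12 p21 a b p \<longleftrightarrow>
     (\<forall>x. x \<notin> inv_states a b \<longrightarrow> p x = 0) \<and> (\<forall>x \<in> inv_states a b. p x \<ge> 0) \<and>
     (\<Sum>x\<in>inv_states a b. p x) = 1 \<and>
     (\<forall>y \<in> inv_states a b. (out_rate y + mu) * p y = (if y = (a, b) then mu else 0) + inflow p y)"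
  unfolding is_stationary_def using stationary_eq_iff_balance by blast

text \<open>Demand only moves mass downwards, so induct on the distance to the top corner.\<close>

lemma balance_homogeneous_zero:
  assumes outside: "\<And>x. x \<notin> inv_states a b \<Longrightarrow> e x = 0"
    and bal: "\<And>y. y \<in> inv_states a b \<Longrightarrow> (out_rate y + mu) * e y = inflow e y"
  shows "e y = 0"
proof (induction "(a - fst y) + (b - snd y)" arbitrary: y rule: less_induct)
  case less
  obtain y1 y2 where y: "y = (y1, y2)" by (cases y)
  show ?case
  proof (cases "y \<in> inv_states a b")
    case True
    have "e (Suc y1, y2) = 0"
      using less[of "(Suc y1, y2)"] outside[of "(Suc y1, y2)"] True
      by (cases "y1 < a") (auto simp: y inv_states_def)
    moreover have "e (y1, Suc y2) = 0"
      using less[of "(y1, Suc y2)"] outside[of "(y1, Suc y2)"] True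
      by (cases "y2 < b") (auto simp: y inv_states_def)
    ultimately have "(out_rate y + mu) * e y = 0" using bal[OF True] by (simp add: y inflow_def)
    then show ?thesis using out_rate_nonneg[of y] mu_pos by simp
  qed (rule outside)
qed

lemma is_stationary_stat_rec: "is_stationary l1 l2 mu p12 p21 a b (stat_rec a b)"
  unfolding is_stationary_iff
  using stat_rec_outside stat_rec_nonneg sum_stat_rec stat_rec_balance[unfolded balance_eqs_def]
  by blast

lemma is_stationary_unique:
  assumes "is_stationary l1 l2 mu p12 p21 a b p"
  shows "p = stat_rec a b"
proof -
  have p_outside: "\<And>x. x \<notin> inv_states a b \<Longrightarrow> p x = 0"
    and p_bal: "\<And>y. y \<in> inv_states a b \<Longrightarrow>
      (out_rate y + mu) * p y = (if y = (a, b) then mu else 0) + inflow p y"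
    using assms unfolding is_stationary_iff by auto
  have diff_bal: "(out_rate y + mu) * (p y - stat_rec a b y) = inflow (\<lambda>x. p x - stat_rec a b x) y"
    if "y \<in> inv_states a b" for y
  proof -
    have "(out_rate y + mu) * (p y - stat_rec a b y)
        = (out_rate y + mu) * p y - (out_rate y + mu) * stat_rec a b y"
      by (rule right_diff_distrib)
    also have "\<dots> = inflow p y - inflow (stat_rec a b) y"
      using p_bal[OF that] stat_rec_balance[of a b, unfolded balance_eqs_def, rule_format, of y]
      by simp
    also have "\<dots> = inflow (\<lambda>x. p x - stat_rec a b x) y"
      by (simp add: inflow_def algebra_simps)
    finally show ?thesis .
  qed
  have "p x - stat_rec a b x = 0" for x
  proof (rule balance_homogeneous_zero[where e = "\<lambda>x. p x - stat_rec a b x"])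
    show "p x - stat_rec a b x = 0" if "x \<notin> inv_states a b" for x
      using that p_outside stat_rec_outside by simp
  qed (rule diff_bal)
  then show ?thesis by auto
qed

lemma stat_dist_eq_stat_rec: "stat_dist l1 l2 mu p12 p21 a b = stat_rec a b"
  unfolding stat_dist_def
  using is_stationary_stat_rec is_stationary_unique by (rule the_equality)

lemma E_m1_rec:
  "(out_rate (a, b) + mu) * E_m1 l1 l2 mu p12 p21 a b = mu * real a
     + (if 0 < a then rate1 b else 0) * E_m1 l1 l2 mu p12 p21 (a - 1) b
     + (if 0 < b then rate2 a else 0) * E_m1 l1 l2 mu p12 p21 a (b - 1)"
  using mean_stat_rec[of a b "\<lambda>y. real (fst y)"] by (simp add: E_m1_def stat_dist_eq_stat_rec)

lemma E_m2_rec: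
  "(out_rate (a, b) + mu) * E_m2 l1 l2 mu p12 p21 a b = mu * real b
     + (if 0 < a then rate1 b else 0) * E_m2 l1 l2 mu p12 p21 (a - 1) b
     + (if 0 < b then rate2 a else 0) * E_m2 l1 l2 mu p12 p21 a (b - 1)"
  using mean_stat_rec[of a b "\<lambda>y. real (snd y)"] by (simp add: E_m2_def stat_dist_eq_stat_rec)

lemma E_m1_zero: "E_m1 l1 l2 mu p12 p21 0 b = 0"
  unfolding E_m1_def by (rule sum.neutral) (auto simp: inv_states_def)

lemma E_m2_zero: "E_m2 l1 l2 mu p12 p21 a 0 = 0"
  unfolding E_m2_def by (rule sum.neutral) (auto simp: inv_states_def)

lemma E_m1_mixed_diff_nonneg: "0 \<le> mixed_diff (E_m1 l1 l2 mu p12 p21) a b"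
proof -
  interpret mean_level_recursion "E_m1 l1 l2 mu p12 p21" l1 l2 "rate1 0" mu
  proof
    show "(rate1 0 + mu) * E_m1 l1 l2 mu p12 p21 (Suc a) 0
        = mu * real (Suc a) + rate1 0 * E_m1 l1 l2 mu p12 p21 a 0" for a
      using E_m1_rec[of "Suc a" 0] by (simp add: out_rate_def del: of_nat_Suc)
    show "(l1 + l2 + mu) * E_m1 l1 l2 mu p12 p21 (Suc a) (Suc b) = mu * real (Suc a)
        + l1 * E_m1 l1 l2 mu p12 p21 a (Suc b) + l2 * E_m1 l1 l2 mu p12 p21 (Suc a) b" for a b
      using E_m1_rec[of "Suc a" "Suc b"] by (simp add: out_rate_def rate1_def rate2_def del: of_nat_Suc)
  qed (use l1_pos l2_pos mu_pos p21_nonneg E_m1_zero in \<open>simp_all add: rate1_def\<close>)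
  show ?thesis by (rule mixed_diff_nonneg)
qed

lemma E_m2_mixed_diff_nonneg: "0 \<le> mixed_diff (E_m2 l1 l2 mu p12 p21) a b"
proof -
  interpret mean_level_recursion "\<lambda>a b. E_m2 l1 l2 mu p12 p21 b a" l2 l1 "rate2 0" mu
  proof
    show "(rate2 0 + mu) * E_m2 l1 l2 mu p12 p21 0 (Suc a)
        = mu * real (Suc a) + rate2 0 * E_m2 l1 l2 mu p12 p21 0 a" for a
      using E_m2_rec[of 0 "Suc a"] by (simp add: out_rate_def del: of_nat_Suc)
    show "(l2 + l1 + mu) * E_m2 l1 l2 mu p12 p21 (Suc b) (Suc a) = mu * real (Suc a)
        + l2 * E_m2 l1 l2 mu p12 p21 (Suc b) a + l1 * E_m2 l1 l2 mu p12 p21 b (Suc a)" for a b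
    proof -
      have "(l1 + l2 + mu) * E_m2 l1 l2 mu p12 p21 (Suc b) (Suc a) = mu * real (Suc a)
        + l1 * E_m2 l1 l2 mu p12 p21 b (Suc a) + l2 * E_m2 l1 l2 mu p12 p21 (Suc b) a"
        using E_m2_rec[of "Suc b" "Suc a"] by (simp add: out_rate_def rate1_def rate2_def del: of_nat_Suc)
      then show ?thesis by (simp only: add.commute[of l2 l1])
    qed
  qed (use l1_pos l2_pos mu_pos p12_nonneg E_m2_zero in \<open>simp_all add: rate2_def\<close>)
  show ?thesis
    using mixed_diff_nonneg[of b a]
      mixed_diff_transpose[where G = "E_m2 l1 l2 mu p12 p21" and a = a and b = b]
    by simp
qed

end

lemma profit2_mixed_diff:
  "mixed_diff (profit2 l1 l2 mu p12 p21 r1 r2 c1 c2 h1 h2) Q1 Q2 =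
     - mu * ((r1 + h1) * mixed_diff (E_m1 l1 l2 mu p12 p21) Q1 Q2
           + (r2 + h2) * mixed_diff (E_m2 l1 l2 mu p12 p21) Q1 Q2)"
  unfolding mixed_diff_def profit2_def by (simp add: algebra_simps)

theorem theorem4:
  fixes l1 l2 mu p12 p21 r1 r2 c1 c2 h1 h2 :: real and Q1 Q2 :: nat
  assumes "l1 > 0" "l2 > 0" "mu > 0"
    and "0 \<le> p12" "p12 \<le> 1" "0 \<le> p21" "p21 \<le> 1"
    and "r1 \<ge> 0" "r2 \<ge> 0" "h1 \<ge> 0" "h2 \<ge> 0"
  shows "profit2 l1 l2 mu p12 p21 r1 r2 c1 c2 h1 h2 (Q1 + 1) (Q2 + 1)
       - profit2 l1 l2 mu p12 p21 r1 r2 c1 c2 h1 h2 (Q1 + 1) Q2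
       - profit2 l1 l2 mu p12 p21 r1 r2 c1 c2 h1 h2 Q1 (Q2 + 1)
       + profit2 l1 l2 mu p12 p21 r1 r2 c1 c2 h1 h2 Q1 Q2 \<le> 0"
proof -
  have inv: "inventory l1 l2 mu p12 p21"
    using assms by unfold_locales
  have "0 \<le> (r1 + h1) * mixed_diff (E_m1 l1 l2 mu p12 p21) Q1 Q2
           + (r2 + h2) * mixed_diff (E_m2 l1 l2 mu p12 p21) Q1 Q2"
    using inventory.E_m1_mixed_diff_nonneg[OF inv] inventory.E_m2_mixed_diff_nonneg[OF inv] assms
    by (intro add_nonneg_nonneg mult_nonneg_nonneg) auto
  then have "mixed_diff (profit2 l1 l2 mu p12 p21 r1 r2 c1 c2 h1 h2) Q1 Q2 \<le> 0"
    unfolding profit2_mixed_diff using assms(3) by simp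
  then show ?thesis by (simp add: mixed_diff_def)
qed

end
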